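(* Let $\mathcal{B}=(T,\bowtie,\ell)$ be a block and $\mathcal S$ any valid schedule of $\mathcal{B}$. Then there exists a legal partition $(B_1,\dots,B_k)$ of $T$ such that the schedule $\mathcal S'=\mathrm{LevelSchedule}(B_1,\dots,B_k)$ is equivalent to $\mathcal S$ and $\mathrm{Lt}_\ell(\mathcal S')\le \mathrm{Lt}_\ell(\mathcal S)$.
   Context: A block consists of a finite set $T$ of transactions, a conflict relation $\bowtie$, and a length function $\ell:T\to\mathbb{N}_{>0}$. Each transaction is deterministic and has a read-set $R(tx)$ and a write-set $W(tx)$ of objects of a global state it may read/write; distinct $tx_1,tx_2$ conflict ($tx_1\bowtie tx_2$) if $R(tx_1)\cap W(tx_2)$, $W(tx_1)\cap R(tx_2)$ or $W(tx_1)\cap W(tx_2)$ is nonempty. A schedule is a set $\mathcal S\subseteq T\times T$ with $(T,\mathcal S)$ acyclic; it is valid if every conflicting pair is joined by a directed path in $(T,\mathcal S)$ in one direction or the other. The latency $\mathrm{Lt}_\ell(\mathcal S)$ is the maximum, over all directed simple paths $P$ of $(T,\mathcal S)$ (including single vertices), of $\sum_{v\in P}\ell(v)$. A set is conflict-free if no two of its elements conflict; a legal partition of $T$ is an ordered sequence of pairwise disjoint conflict-free sets with union $T$. $\mathrm{LevelSchedule}(B_1,\dots,B_k)$: set $B_0=\emptyset$, $\mathcal S=\emptyset$; for $i=1,\dots,k$ and, for each $i$, for $j=i-1,\dots,0$ (decreasing): let $E=\{(u,v)\in B_j\times B_i: u\bowtie v\}$, let $P$ be the set of pairs $(x,y)$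 with a directed path from $x$ to $y$ in the current $(T,\mathcal S)$, and set $\mathcal S\leftarrow\mathcal S\cup(E\setminus P)$; output $\mathcal S$. The scheduler $GBR$ executes a schedule by running each transaction $tx$ in its own thread, which waits until all $tx'$ with $(tx',tx)\in\mathcal S$ have finished, then reads the latest versions of $R(tx)$, executes, writes $W(tx)$, emits its result and signals its out-neighbours. Two schedules are equivalent if for every initial global state, all executions of $GBR$ on either schedule produce the same result for every transaction and the same final global state. *)

theory Defs
  imports Main
begin

(* A block: finite set T of transactions ('tx); each tx has a read set R tx and a
   write set W tx of objects ('o) of a global state ('o \<Rightarrow> 'v).  Its deterministic
   behaviour is given by res tx (the result it emits, from the state it reads) and
   wr tx (the values it writes, from the state it reads); only the values of
   wr tx on W tx are used. *)

definition conflict :: "('tx \<Rightarrow> 'o set) \<Rightarrow> ('tx \<Rightarrow> 'o set) \<Rightarrow> 'tx \<Rightarrow> 'tx \<Rightarrow> bool" where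
  "conflict R W a b \<longleftrightarrow> a \<noteq> b \<and>
     (R a \<inter> W b \<noteq> {} \<or> W a \<inter> R b \<noteq> {} \<or> W a \<inter> W b \<noteq> {})"

definition wf_block :: "'tx set \<Rightarrow> ('tx \<Rightarrow> 'o set) \<Rightarrow> ('tx \<Rightarrow> 'o set)
    \<Rightarrow> ('tx \<Rightarrow> ('o \<Rightarrow> 'v) \<Rightarrow> 'r) \<Rightarrow> ('tx \<Rightarrow> ('o \<Rightarrow> 'v) \<Rightarrow> ('o \<Rightarrow> 'v))
    \<Rightarrow> ('tx \<Rightarrow> nat) \<Rightarrow> bool" where
  "wf_block T R W res wr len \<longleftrightarrow> finite T \<and> (\<forall>t\<in>T. len t > 0) \<and>
     (\<forall>t\<in>T. \<forall>s s'. (\<forall>x\<in>R t. s x = s' x) \<longrightarrow>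
        res t s = res t s' \<and> (\<forall>x\<in>W t. wr t s x = wr t s' x))"

definition is_schedule :: "'tx set \<Rightarrow> ('tx \<times> 'tx) set \<Rightarrow> bool" where
  "is_schedule T S \<longleftrightarrow> S \<subseteq> T \<times> T \<and> acyclic S"

definition valid_schedule :: "'tx set \<Rightarrow> ('tx \<Rightarrow> 'tx \<Rightarrow> bool) \<Rightarrow> ('tx \<times> 'tx) set \<Rightarrow> bool" where
  "valid_schedule T conf S \<longleftrightarrow> is_schedule T S \<and>
     (\<forall>a\<in>T. \<forall>b\<in>T. conf a b \<longrightarrow> (a, b) \<in> S\<^sup>+ \<or> (b, a) \<in> S\<^sup>+)"

definition sched_path :: "'tx set \<Rightarrow> ('tx \<times> 'tx) set \<Rightarrow> 'tx list \<Rightarrow> bool" where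
  "sched_path T S p \<longleftrightarrow> p \<noteq> [] \<and> distinct p \<and> set p \<subseteq> T \<and>
     (\<forall>i. Suc i < length p \<longrightarrow> (p ! i, p ! Suc i) \<in> S)"

definition latency :: "'tx set \<Rightarrow> ('tx \<Rightarrow> nat) \<Rightarrow> ('tx \<times> 'tx) set \<Rightarrow> nat" where
  "latency T len S = Max {sum_list (map len p) | p. sched_path T S p}"

definition conflict_free :: "('tx \<Rightarrow> 'tx \<Rightarrow> bool) \<Rightarrow> 'tx set \<Rightarrow> bool" where
  "conflict_free conf A \<longleftrightarrow> (\<forall>a\<in>A. \<forall>b\<in>A. \<not> conf a b)"

definition legal_partition :: "('tx \<Rightarrow> 'tx \<Rightarrow> bool) \<Rightarrow> 'tx set \<Rightarrow> 'tx set list \<Rightarrow> bool" where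
  "legal_partition conf T Bs \<longleftrightarrow>
     (\<forall>i<length Bs. \<forall>j<length Bs. i \<noteq> j \<longrightarrow> Bs ! i \<inter> Bs ! j = {}) \<and>
     (\<forall>i<length Bs. conflict_free conf (Bs ! i)) \<and>
     \<Union> (set Bs) = T"

definition level_block :: "'tx set list \<Rightarrow> nat \<Rightarrow> 'tx set" where
  "level_block Bs i = (if i = 0 then {} else Bs ! (i - 1))"

definition level_step :: "('tx \<Rightarrow> 'tx \<Rightarrow> bool) \<Rightarrow> 'tx set list \<Rightarrow> nat \<Rightarrow> nat
    \<Rightarrow> ('tx \<times> 'tx) set \<Rightarrow> ('tx \<times> 'tx) set" where
  "level_step conf Bs i j S =
     S \<union> ({(u, v). u \<in> level_block Bs j \<and> v \<in> level_block Bs i \<and> conf u v} - S\<^sup>+)"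

(* for i = 1..k, for j = i-1 downto 0 *)
definition LevelSchedule :: "('tx \<Rightarrow> 'tx \<Rightarrow> bool) \<Rightarrow> 'tx set list \<Rightarrow> ('tx \<times> 'tx) set" where
  "LevelSchedule conf Bs =
     fold (\<lambda>i S. fold (\<lambda>j S. level_step conf Bs i j S) (rev [0..<i]) S)
          [1..<length Bs + 1] {}"

(* GBR executions: each transaction's thread reads (a snapshot of the current state),
   later writes; a thread reads only after all its in-neighbours have written. *)
datatype 'tx gbr_event = Rd 'tx | Wr 'tx

definition occurs_before :: "'a list \<Rightarrow> 'a \<Rightarrow> 'a \<Rightarrow> bool" where
  "occurs_before es a b \<longleftrightarrow> (\<exists>i j. i < j \<and> j < length es \<and> es ! i = a \<and> es ! j = b)"

definition gbr_execution :: "'tx set \<Rightarrow> ('tx \<times> 'tx) set \<Rightarrow> 'tx gbr_event list \<Rightarrow> bool" where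
  "gbr_execution T S es \<longleftrightarrow> distinct es \<and> set es = Rd ` T \<union> Wr ` T \<and>
     (\<forall>t\<in>T. occurs_before es (Rd t) (Wr t)) \<and>
     (\<forall>(u, v)\<in>S. occurs_before es (Wr u) (Rd v))"

fun gbr_step :: "('tx \<Rightarrow> 'o set) \<Rightarrow> ('tx \<Rightarrow> ('o \<Rightarrow> 'v) \<Rightarrow> ('o \<Rightarrow> 'v)) \<Rightarrow> 'tx gbr_event
    \<Rightarrow> ('o \<Rightarrow> 'v) \<times> ('tx \<Rightarrow> 'o \<Rightarrow> 'v) \<Rightarrow> ('o \<Rightarrow> 'v) \<times> ('tx \<Rightarrow> 'o \<Rightarrow> 'v)" where
  "gbr_step W wr (Rd t) (s, snap) = (s, snap(t := s))"
| "gbr_step W wr (Wr t) (s, snap) = ((\<lambda>x. if x \<in> W t then wr t (snap t) x else s x), snap)"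

(* returns final global state and, for each transaction, the state it read *)
definition gbr_run :: "('tx \<Rightarrow> 'o set) \<Rightarrow> ('tx \<Rightarrow> ('o \<Rightarrow> 'v) \<Rightarrow> ('o \<Rightarrow> 'v))
    \<Rightarrow> 'tx gbr_event list \<Rightarrow> ('o \<Rightarrow> 'v) \<Rightarrow> ('o \<Rightarrow> 'v) \<times> ('tx \<Rightarrow> 'o \<Rightarrow> 'v)" where
  "gbr_run W wr es s0 = fold (gbr_step W wr) es (s0, \<lambda>_. s0)"

definition gbr_result :: "('tx \<Rightarrow> 'o set) \<Rightarrow> ('tx \<Rightarrow> ('o \<Rightarrow> 'v) \<Rightarrow> 'r)
    \<Rightarrow> ('tx \<Rightarrow> ('o \<Rightarrow> 'v) \<Rightarrow> ('o \<Rightarrow> 'v)) \<Rightarrow> 'tx gbr_event list \<Rightarrow> ('o \<Rightarrow> 'v) \<Rightarrow> 'tx \<Rightarrow> 'r" where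
  "gbr_result W res wr es s0 t = res t (snd (gbr_run W wr es s0) t)"

definition gbr_final :: "('tx \<Rightarrow> 'o set) \<Rightarrow> ('tx \<Rightarrow> ('o \<Rightarrow> 'v) \<Rightarrow> ('o \<Rightarrow> 'v))
    \<Rightarrow> 'tx gbr_event list \<Rightarrow> ('o \<Rightarrow> 'v) \<Rightarrow> ('o \<Rightarrow> 'v)" where
  "gbr_final W wr es s0 = fst (gbr_run W wr es s0)"

definition equivalent_schedules :: "'tx set \<Rightarrow> ('tx \<Rightarrow> 'o set) \<Rightarrow> ('tx \<Rightarrow> ('o \<Rightarrow> 'v) \<Rightarrow> 'r)
    \<Rightarrow> ('tx \<Rightarrow> ('o \<Rightarrow> 'v) \<Rightarrow> ('o \<Rightarrow> 'v)) \<Rightarrow> ('tx \<times> 'tx) set \<Rightarrow> ('tx \<times> 'tx) set \<Rightarrow> bool" where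
  "equivalent_schedules T W res wr S1 S2 \<longleftrightarrow>
     (\<forall>s0 es1 es2. gbr_execution T S1 es1 \<longrightarrow> gbr_execution T S2 es2 \<longrightarrow>
        (\<forall>t\<in>T. gbr_result W res wr es1 s0 t = gbr_result W res wr es2 s0 t) \<and>
        gbr_final W wr es1 s0 = gbr_final W wr es2 s0)"

end

theory Submission
  imports Defs
begin

text \<open>
  The witness is the partition of \<open>T\<close> into singletons, listed in a topological order of \<open>S\<close>.
  Every edge that \<open>LevelSchedule\<close> adds joins a conflicting pair in this order and hence lies
  in \<open>S\<^sup>+\<close>, while every conflicting pair ordered by \<open>S\<close> stays connected in the level
  schedule. Thus the two schedules order all conflicting pairs alike, and each path of the level
  schedule refines to a path of \<open>S\<close> through at least the same transactions, which bounds the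
  latency.

  Equivalence holds for any two valid schedules with the same conflict order. In a GBR execution
  the value of \<open>x\<close> read by \<open>t\<close> (or left in the final state) is the initial one or was
  written by the \<open>S\<^sup>+\<close>-greatest of the transactions writing \<open>x\<close> before \<open>t\<close> (or of all
  writers of \<open>x\<close>). These writers conflict pairwise and with \<open>t\<close>, so the conflict order
  fixes both that set and its greatest element. Well-founded induction along \<open>S\<^sup>+\<close> then
  shows that every transaction reads the same values under both schedules.
\<close>

section \<open>Order of events in GBR executions\<close>

lemma occurs_before_trans:
  assumes "distinct es" "occurs_before es a b" "occurs_before es b c"
  shows "occurs_before es a c"
proof -
  obtain i j where ij: "i < j" "j < length es" "es ! i = a" "es ! j = b"
    using assms(2) unfolding occurs_before_def by blast
  obtain j' k where jk: "j' < k" "k < length es" "es ! j' = b" "es ! k = c"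
    using assms(3) unfolding occurs_before_def by blast
  have "j = j'"
    using nth_eq_iff_index_eq[OF assms(1) ij(2), of j'] ij jk by simp
  then show ?thesis
    unfolding occurs_before_def using ij jk by (metis order.strict_trans)
qed

lemma occurs_before_irrefl: "distinct es \<Longrightarrow> \<not> occurs_before es a a"
  unfolding occurs_before_def by (metis nat_neq_iff nth_eq_iff_index_eq order.strict_trans)

lemma occurs_before_append_Cons_iff:
  assumes "distinct (p @ a # q)"
  shows "occurs_before (p @ a # q) b a \<longleftrightarrow> b \<in> set p"
proof
  assume "occurs_before (p @ a # q) b a"
  then obtain i j where ij: "i < j" "j < length (p @ a # q)"
      "(p @ a # q) ! i = b" "(p @ a # q) ! j = a"
    unfolding occurs_before_def by blast
  have "j = length p"
    using nth_eq_iff_index_eq[OF assms ij(2), of "length p"] ij(4) by simp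
  with ij show "b \<in> set p"
    by (auto simp: nth_append in_set_conv_nth)
next
  assume "b \<in> set p"
  then obtain i where "i < length p" "p ! i = b"
    by (auto simp: in_set_conv_nth)
  then show "occurs_before (p @ a # q) b a"
    unfolding occurs_before_def
    by (intro exI[of _ i] exI[of _ "length p"]) (simp add: nth_append)
qed

lemma gbr_execution_distinct: "gbr_execution T S es \<Longrightarrow> distinct es"
  unfolding gbr_execution_def by simp

lemma gbr_execution_read_before_write:
  "gbr_execution T S es \<Longrightarrow> t \<in> T \<Longrightarrow> occurs_before es (Rd t) (Wr t)"
  unfolding gbr_execution_def by simp

lemma gbr_execution_trancl:
  assumes ex: "gbr_execution T S es" and "S \<subseteq> T \<times> T" and "(a, b) \<in> S\<^sup>+"
  shows "occurs_before es (Wr a) (Rd b)"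
  using \<open>(a, b) \<in> S\<^sup>+\<close>
proof (induction rule: trancl_induct)
  case (base b)
  then show ?case
    using ex unfolding gbr_execution_def by blast
next
  case (step b c)
  have "b \<in> T"
    using step.hyps(2) \<open>S \<subseteq> T \<times> T\<close> by blast
  have "occurs_before es (Wr b) (Rd c)"
    using step.hyps(2) ex unfolding gbr_execution_def by blast
  then show ?case
    using step.IH gbr_execution_read_before_write[OF ex \<open>b \<in> T\<close>]
    by (meson occurs_before_trans gbr_execution_distinct[OF ex])
qed

lemma gbr_execution_conflict_iff:
  assumes v: "valid_schedule T conf S" and ex: "gbr_execution T S es"
    and "a \<in> T" "b \<in> T" "conf a b"
  shows "occurs_before es (Wr a) (Rd b) \<longleftrightarrow> (a, b) \<in> S\<^sup>+"
proof
  have ST: "S \<subseteq> T \<times> T"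
    using v unfolding valid_schedule_def is_schedule_def by simp
  have d: "distinct es"
    using gbr_execution_distinct[OF ex] .
  assume ab: "occurs_before es (Wr a) (Rd b)"
  show "(a, b) \<in> S\<^sup>+"
  proof (rule ccontr)
    assume "(a, b) \<notin> S\<^sup>+"
    then have "(b, a) \<in> S\<^sup>+"
      using v assms(3-5) unfolding valid_schedule_def by blast
    then have "occurs_before es (Wr b) (Rd a)"
      using gbr_execution_trancl[OF ex ST] by blast
    \<comment> \<open>Wr a < Rd b < Wr b < Rd a < Wr a\<close>
    then have "occurs_before es (Wr a) (Wr a)"
      using ab gbr_execution_read_before_write[OF ex] assms(3,4)
      by (meson occurs_before_trans d)
    then show False
      using occurs_before_irrefl[OF d] by blast
  qed
next
  assume "(a, b) \<in> S\<^sup>+"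
  then show "occurs_before es (Wr a) (Rd b)"
    using gbr_execution_trancl[OF ex] v unfolding valid_schedule_def is_schedule_def by blast
qed

section \<open>Values read and written in a GBR run\<close>

lemma gbr_run_append: "gbr_run W wr (p @ q) s0 = fold (gbr_step W wr) q (gbr_run W wr p s0)"
  by (simp add: gbr_run_def)

lemma fold_gbr_step_unwritten:
  assumes "\<And>u. Wr u \<in> set q \<Longrightarrow> x \<notin> W u"
  shows "fst (fold (gbr_step W wr) q \<sigma>) x = fst \<sigma> x"
  using assms
proof (induction q arbitrary: \<sigma>)
  case (Cons e q)
  then show ?case
    by (cases e; cases \<sigma>) auto
qed simp

lemma fold_gbr_step_unread:
  assumes "Rd t \<notin> set q"
  shows "snd (fold (gbr_step W wr) q \<sigma>) t = snd \<sigma> t"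
  using assms
proof (induction q arbitrary: \<sigma>)
  case (Cons e q)
  then show ?case
    by (cases e; cases \<sigma>) auto
qed simp

lemma gbr_run_read:
  assumes "Rd t \<notin> set q"
  shows "snd (gbr_run W wr (p @ Rd t # q) s0) t = fst (gbr_run W wr p s0)"
  using assms by (cases "gbr_run W wr p s0") (simp add: gbr_run_append fold_gbr_step_unread)

definition greatest_in :: "('a \<times> 'a) set \<Rightarrow> 'a set \<Rightarrow> 'a \<Rightarrow> bool" where
  "greatest_in r A m \<longleftrightarrow> m \<in> A \<and> (\<forall>a \<in> A - {m}. (a, m) \<in> r)"

lemma greatest_in_trancl_exists:
  assumes "finite A" "A \<noteq> {}" "acyclic r"
    and total: "\<And>a b. a \<in> A \<Longrightarrow> b \<in> A \<Longrightarrow> a \<noteq> b \<Longrightarrow> (a, b) \<in> r\<^sup>+ \<or> (b, a) \<in> r\<^sup>+"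
  shows "\<exists>m. greatest_in (r\<^sup>+) A m"
proof -
  have "acyclic (r\<^sup>+)"
    using \<open>acyclic r\<close> by (simp add: acyclic_def)
  then have "acyclic (r\<^sup>+ \<inter> A \<times> A)"
    by (rule acyclic_subset) blast
  then have "wf ((r\<^sup>+ \<inter> A \<times> A)\<inverse>)"
    using \<open>finite A\<close> by (intro finite_acyclic_wf_converse) (auto intro: finite_subset)
  then obtain m where "m \<in> A" "\<And>a. a \<in> A \<Longrightarrow> (m, a) \<notin> r\<^sup>+"
    using \<open>A \<noteq> {}\<close> by (rule wfE_min') blast
  then have "greatest_in (r\<^sup>+) A m"
    unfolding greatest_in_def using total by blast
  then show ?thesis ..
qed

definition writers :: "('tx \<Rightarrow> 'o set) \<Rightarrow> 'tx gbr_event list \<Rightarrow> 'o \<Rightarrow> 'tx set" where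
  "writers W p x = {u. Wr u \<in> set p \<and> x \<in> W u}"

lemma gbr_run_unwritten: "writers W p x = {} \<Longrightarrow> fst (gbr_run W wr p s0) x = s0 x"
  unfolding gbr_run_def writers_def by (subst fold_gbr_step_unwritten) auto

lemma gbr_run_last_writer:
  assumes ex: "gbr_execution T S es" and ST: "S \<subseteq> T \<times> T" and es: "es = p @ q"
    and last: "greatest_in (S\<^sup>+) (writers W p x) u0"
  shows "fst (gbr_run W wr p s0) x = wr u0 (snd (gbr_run W wr es s0) u0) x"
proof -
  have d: "distinct es"
    using gbr_execution_distinct[OF ex] .
  have "Wr u0 \<in> set p" and "x \<in> W u0"
    using last unfolding greatest_in_def writers_def by auto
  then obtain a b where p: "p = a @ Wr u0 # b"
    by (meson split_list)
  have "u0 \<in> T"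
    using ex es \<open>Wr u0 \<in> set p\<close> unfolding gbr_execution_def by auto
  have es': "es = a @ Wr u0 # (b @ q)"
    using es p by simp
  have unwritten: "x \<notin> W u" if "Wr u \<in> set b" for u
  proof
    assume "x \<in> W u"
    have "u \<noteq> u0"
      using d es' that by auto
    with \<open>x \<in> W u\<close> that have "(u, u0) \<in> S\<^sup>+"
      using last p unfolding greatest_in_def writers_def by auto
    then have "occurs_before es (Wr u) (Wr u0)"
      using gbr_execution_trancl[OF ex ST] gbr_execution_read_before_write[OF ex \<open>u0 \<in> T\<close>]
      by (meson occurs_before_trans d)
    then have "Wr u \<in> set a"
      using d unfolding es' by (simp add: occurs_before_append_Cons_iff)
    then show False
      using d es' that by auto
  qed
  have "Rd u0 \<in> set a"
    using gbr_execution_read_before_write[OF ex \<open>u0 \<in> T\<close>] d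
    unfolding es' by (simp add: occurs_before_append_Cons_iff)
  then obtain a1 a2 where a: "a = a1 @ Rd u0 # a2"
    by (meson split_list)
  have "fst (gbr_run W wr p s0) x = wr u0 (snd (gbr_run W wr a s0) u0) x"
    using \<open>x \<in> W u0\<close> unwritten
    by (cases "gbr_run W wr a s0") (simp add: p gbr_run_append fold_gbr_step_unwritten)
  also have "snd (gbr_run W wr a s0) u0 = fst (gbr_run W wr a1 s0)"
    using d unfolding es' a by (intro gbr_run_read) simp
  also have "\<dots> = snd (gbr_run W wr es s0) u0"
    using d gbr_run_read[of u0 "a2 @ Wr u0 # b @ q" W wr a1 s0] unfolding es' a by simp
  finally show ?thesis .
qed

lemma gbr_execution_read_split:
  assumes ex: "gbr_execution T S es" and "t \<in> T"
  obtains p q where "es = p @ Rd t # q" "snd (gbr_run W wr es s0) t = fst (gbr_run W wr p s0)"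
proof -
  have "Rd t \<in> set es"
    using ex \<open>t \<in> T\<close> unfolding gbr_execution_def by simp
  then obtain p q where es: "es = p @ Rd t # q"
    by (meson split_list)
  moreover have "Rd t \<notin> set q"
    using gbr_execution_distinct[OF ex] es by simp
  ultimately show ?thesis
    using that gbr_run_read by metis
qed

lemma writers_before_read:
  assumes v: "valid_schedule T (conflict R W) S" and ex: "gbr_execution T S es"
    and es: "es = p @ Rd t # q" and "x \<in> R t"
  shows "writers W p x = {u \<in> T. x \<in> W u \<and> (u, t) \<in> S\<^sup>+}"
proof -
  have d: "distinct (p @ Rd t # q)"
    using gbr_execution_distinct[OF ex] es by simp
  have "t \<in> T"
    using ex es unfolding gbr_execution_def by auto
  have "occurs_before es (Wr u) (Rd t) \<longleftrightarrow> u \<in> T \<and> (u, t) \<in> S\<^sup>+" if "x \<in> W u" for u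
  proof (cases "u = t")
    case True
    have "\<not> occurs_before es (Wr t) (Rd t)"
      using occurs_before_trans[OF gbr_execution_distinct[OF ex] _
          gbr_execution_read_before_write[OF ex \<open>t \<in> T\<close>]]
        occurs_before_irrefl[OF gbr_execution_distinct[OF ex]] by blast
    moreover have "(t, t) \<notin> S\<^sup>+"
      using v unfolding valid_schedule_def is_schedule_def acyclic_def by blast
    ultimately show ?thesis
      using True by blast
  next
    case False
    have "u \<in> T" if "occurs_before es (Wr u) (Rd t)"
    proof -
      have "Wr u \<in> set es"
        using that unfolding occurs_before_def by (metis nth_mem order.strict_trans)
      then show ?thesis
        using ex unfolding gbr_execution_def by auto
    qed
    moreover have "conflict R W u t"
      using False \<open>x \<in> W u\<close> \<open>x \<in> R t\<close> unfolding conflict_def by blast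
    ultimately show ?thesis
      using gbr_execution_conflict_iff[OF v ex _ \<open>t \<in> T\<close>] by blast
  qed
  then show ?thesis
    using d unfolding writers_def es by (auto simp: occurs_before_append_Cons_iff)
qed

lemma writers_gbr_execution: "gbr_execution T S es \<Longrightarrow> writers W es x = {u \<in> T. x \<in> W u}"
  unfolding writers_def gbr_execution_def by auto

section \<open>Schedules with the same conflict order are equivalent\<close>

lemma wf_block_cong:
  assumes "wf_block T R W res wr len" "t \<in> T" "\<forall>y\<in>R t. s y = s' y"
  shows "res t s = res t s'" and "x \<in> W t \<Longrightarrow> wr t s x = wr t s' x"
  using assms unfolding wf_block_def by blast+

definition same_conflict_order ::
    "'tx set \<Rightarrow> ('tx \<Rightarrow> 'tx \<Rightarrow> bool) \<Rightarrow> ('tx \<times> 'tx) set \<Rightarrow> ('tx \<times> 'tx) set \<Rightarrow> bool" where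
  "same_conflict_order T conf S1 S2 \<longleftrightarrow>
     (\<forall>a\<in>T. \<forall>b\<in>T. conf a b \<longrightarrow> ((a, b) \<in> S1\<^sup>+ \<longleftrightarrow> (a, b) \<in> S2\<^sup>+))"

lemma greatest_writer_exists:
  assumes v: "valid_schedule T (conflict R W) S"
    and "finite A" "A \<noteq> {}" and writers: "A \<subseteq> {u \<in> T. x \<in> W u}"
  shows "\<exists>m. greatest_in (S\<^sup>+) A m"
proof (rule greatest_in_trancl_exists[OF \<open>finite A\<close> \<open>A \<noteq> {}\<close>])
  show "acyclic S"
    using v unfolding valid_schedule_def is_schedule_def by simp
  fix a b assume "a \<in> A" "b \<in> A" "a \<noteq> b"
  then have "conflict R W a b"
    using writers unfolding conflict_def by blast
  then show "(a, b) \<in> S\<^sup>+ \<or> (b, a) \<in> S\<^sup>+"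
    using v \<open>a \<in> A\<close> \<open>b \<in> A\<close> writers unfolding valid_schedule_def by blast
qed

lemma greatest_writer_same_conflict_order:
  assumes same: "same_conflict_order T (conflict R W) S1 S2"
    and writers: "A \<subseteq> {u \<in> T. x \<in> W u}" and greatest: "greatest_in (S1\<^sup>+) A m"
  shows "greatest_in (S2\<^sup>+) A m"
  unfolding greatest_in_def
proof (intro conjI ballI)
  show "m \<in> A"
    using greatest unfolding greatest_in_def by simp
  fix a assume "a \<in> A - {m}"
  then have "(a, m) \<in> S1\<^sup>+" and "conflict R W a m"
    using greatest writers \<open>m \<in> A\<close> unfolding greatest_in_def conflict_def by auto
  then show "(a, m) \<in> S2\<^sup>+"
    using same writers \<open>a \<in> A - {m}\<close> \<open>m \<in> A\<close> unfolding same_conflict_order_def by blast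
qed

lemma gbr_prefix_values_agree:
  assumes wf: "wf_block T R W res wr len"
    and v1: "valid_schedule T (conflict R W) S1" and ex1: "gbr_execution T S1 es1"
    and es1: "es1 = p1 @ q1"
    and v2: "valid_schedule T (conflict R W) S2" and ex2: "gbr_execution T S2 es2"
    and es2: "es2 = p2 @ q2"
    and same: "same_conflict_order T (conflict R W) S1 S2"
    and writers: "writers W p1 x = writers W p2 x"
    and reads: "\<And>u y. u \<in> writers W p1 x \<Longrightarrow> y \<in> R u \<Longrightarrow>
                  snd (gbr_run W wr es1 s0) u y = snd (gbr_run W wr es2 s0) u y"
  shows "fst (gbr_run W wr p1 s0) x = fst (gbr_run W wr p2 s0) x"
proof (cases "writers W p1 x = {}")
  case True
  then show ?thesis
    using writers by (simp add: gbr_run_unwritten)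
next
  case False
  have ST1: "S1 \<subseteq> T \<times> T" and ST2: "S2 \<subseteq> T \<times> T"
    using v1 v2 unfolding valid_schedule_def is_schedule_def by auto
  have A: "writers W p1 x \<subseteq> {u \<in> T. x \<in> W u}"
    using ex1 es1 unfolding writers_def gbr_execution_def by auto
  have "finite T"
    using wf unfolding wf_block_def by simp
  then have "finite (writers W p1 x)"
    using finite_subset[OF A] by simp
  then obtain m where m1: "greatest_in (S1\<^sup>+) (writers W p1 x) m"
    using greatest_writer_exists[OF v1 _ False A] by blast
  then have m2: "greatest_in (S2\<^sup>+) (writers W p2 x) m"
    using greatest_writer_same_conflict_order[OF same A] writers by simp
  have "m \<in> T" and "x \<in> W m"
    using m1 A unfolding greatest_in_def by auto
  then have "wr m (snd (gbr_run W wr es1 s0) m) x = wr m (snd (gbr_run W wr es2 s0) m) x"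
    using wf_block_cong(2)[OF wf] reads m1 unfolding greatest_in_def by blast
  then show ?thesis
    using gbr_run_last_writer[OF ex1 ST1 es1 m1, of wr s0]
      gbr_run_last_writer[OF ex2 ST2 es2 m2, of wr s0] by simp
qed

lemma same_conflict_order_write_read:
  assumes same: "same_conflict_order T (conflict R W) S1 S2" and "acyclic S1" "acyclic S2"
    and "u \<in> T" "t \<in> T" "x \<in> W u" "x \<in> R t"
  shows "(u, t) \<in> S1\<^sup>+ \<longleftrightarrow> (u, t) \<in> S2\<^sup>+"
proof (cases "u = t")
  case True
  then show ?thesis
    using \<open>acyclic S1\<close> \<open>acyclic S2\<close> by (simp add: acyclic_def)
next
  case False
  then have "conflict R W u t"
    using \<open>x \<in> W u\<close> \<open>x \<in> R t\<close> unfolding conflict_def by blast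
  then show ?thesis
    using same \<open>u \<in> T\<close> \<open>t \<in> T\<close> unfolding same_conflict_order_def by blast
qed

lemma gbr_read_states_agree:
  assumes wf: "wf_block T R W res wr len"
    and v1: "valid_schedule T (conflict R W) S1" and ex1: "gbr_execution T S1 es1"
    and v2: "valid_schedule T (conflict R W) S2" and ex2: "gbr_execution T S2 es2"
    and same: "same_conflict_order T (conflict R W) S1 S2" and "t \<in> T" "x \<in> R t"
  shows "snd (gbr_run W wr es1 s0) t x = snd (gbr_run W wr es2 s0) t x"
proof -
  have "finite T"
    using wf unfolding wf_block_def by simp
  have "S1 \<subseteq> T \<times> T" and "acyclic S1" and "acyclic S2"
    using v1 v2 unfolding valid_schedule_def is_schedule_def by auto
  have "finite S1"
    by (rule finite_subset[OF \<open>S1 \<subseteq> T \<times> T\<close>]) (simp add: \<open>finite T\<close>)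
  then have "wf (S1\<^sup>+)"
    using \<open>acyclic S1\<close> by (intro wf_trancl finite_acyclic_wf)
  then show ?thesis
    using \<open>t \<in> T\<close> \<open>x \<in> R t\<close>
  proof (induction t arbitrary: x rule: wf_induct_rule)
    case (less t)
    obtain p1 q1 where es1: "es1 = p1 @ Rd t # q1"
      and read1: "snd (gbr_run W wr es1 s0) t = fst (gbr_run W wr p1 s0)"
      using gbr_execution_read_split[OF ex1 less.prems(1)] .
    obtain p2 q2 where es2: "es2 = p2 @ Rd t # q2"
      and read2: "snd (gbr_run W wr es2 s0) t = fst (gbr_run W wr p2 s0)"
      using gbr_execution_read_split[OF ex2 less.prems(1)] .
    have writers1: "writers W p1 x = {u \<in> T. x \<in> W u \<and> (u, t) \<in> S1\<^sup>+}"
      using writers_before_read[OF v1 ex1 es1 less.prems(2)] .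
    then have "writers W p1 x = writers W p2 x"
      using writers_before_read[OF v2 ex2 es2 less.prems(2)]
        same_conflict_order_write_read[OF same \<open>acyclic S1\<close> \<open>acyclic S2\<close> _ less.prems(1) _ less.prems(2)]
      by blast
    moreover have "snd (gbr_run W wr es1 s0) u y = snd (gbr_run W wr es2 s0) u y"
      if "u \<in> writers W p1 x" "y \<in> R u" for u y
      using that less.IH writers1 by blast
    ultimately show ?case
      using gbr_prefix_values_agree[OF wf v1 ex1 es1 v2 ex2 es2 same] read1 read2 by simp
  qed
qed

theorem equivalent_schedules_if_same_conflict_order:
  assumes wf: "wf_block T R W res wr len"
    and v1: "valid_schedule T (conflict R W) S1" and v2: "valid_schedule T (conflict R W) S2"
    and same: "same_conflict_order T (conflict R W) S1 S2"
  shows "equivalent_schedules T W res wr S1 S2"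
  unfolding equivalent_schedules_def
proof (intro allI impI conjI ballI ext)
  fix s0 es1 es2
  assume ex1: "gbr_execution T S1 es1" and ex2: "gbr_execution T S2 es2"
  note reads = gbr_read_states_agree[OF wf v1 ex1 v2 ex2 same]
  show "gbr_result W res wr es1 s0 t = gbr_result W res wr es2 s0 t" if "t \<in> T" for t
    unfolding gbr_result_def using wf_block_cong(1)[OF wf that] reads[OF that] by blast
  fix x
  have "writers W es1 x = writers W es2 x"
    using writers_gbr_execution[OF ex1, of W x] writers_gbr_execution[OF ex2, of W x] by simp
  moreover have "snd (gbr_run W wr es1 s0) u y = snd (gbr_run W wr es2 s0) u y"
    if "u \<in> writers W es1 x" "y \<in> R u" for u y
    using that reads writers_gbr_execution[OF ex1, of W x] by simp
  ultimately show "gbr_final W wr es1 s0 x = gbr_final W wr es2 s0 x"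
    unfolding gbr_final_def
    using gbr_prefix_values_agree[OF wf v1 ex1 _ v2 ex2 _ same, of es1 "[]" es2 "[]"] by simp
qed

section \<open>Level schedules\<close>

lemma fold_invariant_established:
  assumes "x \<in> set xs" "\<And>s. P (f x s)" "\<And>y s. y \<in> set xs \<Longrightarrow> P s \<Longrightarrow> P (f y s)"
  shows "P (fold f xs s)"
proof -
  obtain ys zs where xs: "xs = ys @ x # zs"
    using split_list[OF assms(1)] by blast
  show ?thesis
    unfolding xs fold_append comp_def fold.simps
    by (rule fold_invariant[where Q = "\<lambda>y. y \<in> set xs"]) (use assms xs in auto)
qed

lemma level_step_mono: "S \<subseteq> level_step conf Bs i j S"
  unfolding level_step_def by blast

lemma LevelSchedule_edge:
  assumes "(u, v) \<in> LevelSchedule conf Bs"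
  shows "conf u v \<and> (\<exists>a b. a < b \<and> b < length Bs \<and> u \<in> Bs ! a \<and> v \<in> Bs ! b)"
proof -
  define E where
    "E = {(u, v). conf u v \<and> (\<exists>a b. a < b \<and> b < length Bs \<and> u \<in> Bs ! a \<and> v \<in> Bs ! b)}"
  have step: "level_step conf Bs i j S \<subseteq> E" if "S \<subseteq> E" "j < i" "i \<le> length Bs" for i j S
  proof -
    have "(u, v) \<in> E" if "u \<in> level_block Bs j" "v \<in> level_block Bs i" "conf u v" for u v
    proof -
      obtain a where "j = Suc a"
        using \<open>u \<in> level_block Bs j\<close> unfolding level_block_def by (cases j) auto
      moreover obtain b where "i = Suc b"
        using \<open>j < i\<close> by (cases i) auto
      ultimately have "a < b" "b < length Bs" "u \<in> Bs ! a" "v \<in> Bs ! b"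
        using that \<open>j < i\<close> \<open>i \<le> length Bs\<close> unfolding level_block_def by auto
      then show ?thesis
        using \<open>conf u v\<close> unfolding E_def by blast
    qed
    then show ?thesis
      using \<open>S \<subseteq> E\<close> unfolding level_step_def by blast
  qed
  have "LevelSchedule conf Bs \<subseteq> E"
    unfolding LevelSchedule_def
  proof (rule fold_invariant[where Q = "\<lambda>i. i \<le> length Bs" and P = "\<lambda>S. S \<subseteq> E"])
    fix i S assume "i \<le> length Bs" "S \<subseteq> E"
    show "fold (\<lambda>j. level_step conf Bs i j) (rev [0..<i]) S \<subseteq> E"
    proof (rule fold_invariant[where Q = "\<lambda>j. j < i" and P = "\<lambda>S. S \<subseteq> E"])
      show "level_step conf Bs i j S' \<subseteq> E" if "j < i" "S' \<subseteq> E" for j S'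
        using step that \<open>i \<le> length Bs\<close> by blast
    qed (use \<open>S \<subseteq> E\<close> in auto)
  qed auto
  then show ?thesis
    using assms unfolding E_def by blast
qed

lemma LevelSchedule_connects:
  assumes "a < b" "b < length Bs" "u \<in> Bs ! a" "v \<in> Bs ! b" "conf u v"
  shows "(u, v) \<in> (LevelSchedule conf Bs)\<^sup>+"
proof -
  let ?P = "\<lambda>S. (u, v) \<in> S\<^sup>+"
  have preserved: "?P (level_step conf Bs i j S)" if "?P S" for i j S
    using that trancl_mono[OF _ level_step_mono] by blast
  have established: "?P (level_step conf Bs (Suc b) (Suc a) S)" for S
  proof (cases "?P S")
    case False
    then have "(u, v) \<in> level_step conf Bs (Suc b) (Suc a) S"
      using assms unfolding level_step_def level_block_def by simp
    then show ?thesis ..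
  qed (rule preserved)
  show ?thesis
    unfolding LevelSchedule_def
  proof (rule fold_invariant_established[where x = "Suc b"])
    show "Suc b \<in> set [1..<length Bs + 1]"
      using assms by (simp, linarith)
    show "?P (fold (\<lambda>j. level_step conf Bs i j) js S)" if "?P S" for i js S
      using that by (induction js arbitrary: S) (auto intro: preserved)
    show "?P (fold (\<lambda>j. level_step conf Bs (Suc b) j) (rev [0..<Suc b]) S)" for S
      by (rule fold_invariant_established[where x = "Suc a"])
        (use assms established preserved in auto)
  qed
qed

definition follows_schedule :: "('tx \<Rightarrow> 'tx \<Rightarrow> bool) \<Rightarrow> ('tx \<times> 'tx) set \<Rightarrow> 'tx set list \<Rightarrow> bool" where
  "follows_schedule conf S Bs \<longleftrightarrow>
     (\<forall>a b u v. a < b \<longrightarrow> b < length Bs \<longrightarrow> u \<in> Bs ! a \<longrightarrow> v \<in> Bs ! b \<longrightarrow> conf u v \<longrightarrow>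
        (u, v) \<in> S\<^sup>+)"

lemma LevelSchedule_subset_trancl:
  "follows_schedule conf S Bs \<Longrightarrow> LevelSchedule conf Bs \<subseteq> S\<^sup>+"
  unfolding follows_schedule_def by (auto dest: LevelSchedule_edge)

lemma LevelSchedule_trancl_subset_trancl:
  "follows_schedule conf S Bs \<Longrightarrow> (LevelSchedule conf Bs)\<^sup>+ \<subseteq> S\<^sup>+"
  using trancl_mono_subset[OF LevelSchedule_subset_trancl] by simp

lemma LevelSchedule_same_conflict_order:
  assumes v: "valid_schedule T conf S" and "symp conf"
    and legal: "legal_partition conf T Bs" and follows: "follows_schedule conf S Bs"
  shows "same_conflict_order T conf (LevelSchedule conf Bs) S"
  unfolding same_conflict_order_def
proof (intro ballI impI iffI)
  fix u v assume "u \<in> T" "v \<in> T" "conf u v"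
  show "(u, v) \<in> S\<^sup>+" if "(u, v) \<in> (LevelSchedule conf Bs)\<^sup>+"
    using LevelSchedule_trancl_subset_trancl[OF follows] that by blast
  assume uv: "(u, v) \<in> S\<^sup>+"
  obtain a b where "a < length Bs" "u \<in> Bs ! a" "b < length Bs" "v \<in> Bs ! b"
    using legal \<open>u \<in> T\<close> \<open>v \<in> T\<close> unfolding legal_partition_def by (metis UnionE in_set_conv_nth)
  moreover have "a \<noteq> b"
    using legal calculation \<open>conf u v\<close> unfolding legal_partition_def conflict_free_def by blast
  moreover have "\<not> b < a"
  proof
    assume "b < a"
    then have "(v, u) \<in> S\<^sup>+"
      using follows calculation \<open>conf u v\<close> \<open>symp conf\<close>
      unfolding follows_schedule_def by (meson sympD)
    with uv have "(u, u) \<in> S\<^sup>+"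
      by simp
    then show False
      using v unfolding valid_schedule_def is_schedule_def acyclic_def by blast
  qed
  ultimately show "(u, v) \<in> (LevelSchedule conf Bs)\<^sup>+"
    using LevelSchedule_connects \<open>conf u v\<close> by (metis linorder_neqE_nat)
qed

lemma LevelSchedule_valid:
  assumes v: "valid_schedule T conf S" and "symp conf"
    and "legal_partition conf T Bs" and follows: "follows_schedule conf S Bs"
  shows "valid_schedule T conf (LevelSchedule conf Bs)"
proof -
  let ?L = "LevelSchedule conf Bs"
  have "?L \<subseteq> S\<^sup>+" and "?L\<^sup>+ \<subseteq> S\<^sup>+"
    using LevelSchedule_subset_trancl[OF follows] LevelSchedule_trancl_subset_trancl[OF follows] .
  moreover have "S\<^sup>+ \<subseteq> T \<times> T" and "acyclic S"
    using v trancl_subset_Sigma unfolding valid_schedule_def is_schedule_def by auto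
  ultimately have "is_schedule T ?L"
    unfolding is_schedule_def acyclic_def by blast
  moreover have "(a, b) \<in> ?L\<^sup>+ \<or> (b, a) \<in> ?L\<^sup>+" if "a \<in> T" "b \<in> T" "conf a b" for a b
    using v that sympD[OF \<open>symp conf\<close> \<open>conf a b\<close>] LevelSchedule_same_conflict_order[OF assms]
    unfolding valid_schedule_def same_conflict_order_def by blast
  ultimately show ?thesis
    unfolding valid_schedule_def by blast
qed

lemma topological_order_exists:
  assumes "finite S" "acyclic S" "finite A"
  shows "\<exists>xs. distinct xs \<and> set xs = A \<and> sorted_wrt (\<lambda>u v. (v, u) \<notin> S\<^sup>+) xs"
proof -
  define ancestors where "ancestors u = card {v. (v, u) \<in> S\<^sup>+}" for u
  have ancestors_less: "ancestors u < ancestors v" if "(u, v) \<in> S\<^sup>+" for u v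
  proof -
    have "{w. (w, u) \<in> S\<^sup>+} \<subset> {w. (w, v) \<in> S\<^sup>+}"
      using that \<open>acyclic S\<close> unfolding acyclic_def by (auto intro: trancl_trans)
    moreover have "finite {w. (w, v) \<in> S\<^sup>+}"
      by (rule finite_subset[of _ "fst ` S\<^sup>+"]) (use \<open>finite S\<close> in force)+
    ultimately show ?thesis
      unfolding ancestors_def by (rule psubset_card_mono[rotated])
  qed
  obtain ys where "set ys = A" "distinct ys"
    using finite_distinct_list[OF \<open>finite A\<close>] by blast
  moreover have "sorted_wrt (\<lambda>u v. ancestors u \<le> ancestors v) (sort_key ancestors ys)"
    using sorted_sort_key[of ancestors ys] unfolding sorted_map .
  then have "sorted_wrt (\<lambda>u v. (v, u) \<notin> S\<^sup>+) (sort_key ancestors ys)"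
    by (rule sorted_wrt_mono_rel[rotated]) (use ancestors_less leD in blast)
  ultimately show ?thesis
    by (intro exI[of _ "sort_key ancestors ys"]) simp
qed

lemma legal_partition_singletons:
  assumes "irreflp conf" "distinct xs" "set xs = T"
  shows "legal_partition conf T (map (\<lambda>x. {x}) xs)"
  using assms unfolding legal_partition_def conflict_free_def irreflp_def
  by (auto simp: nth_eq_iff_index_eq)

lemma follows_schedule_singletons:
  assumes v: "valid_schedule T conf S" and "set xs \<subseteq> T"
    and topological: "sorted_wrt (\<lambda>u v. (v, u) \<notin> S\<^sup>+) xs"
  shows "follows_schedule conf S (map (\<lambda>x. {x}) xs)"
  unfolding follows_schedule_def
proof (intro allI impI)
  fix a b u v
  assume "a < b" "b < length (map (\<lambda>x. {x}) xs)" "u \<in> map (\<lambda>x. {x}) xs ! a"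
    "v \<in> map (\<lambda>x. {x}) xs ! b" "conf u v"
  then have "u = xs ! a" "v = xs ! b" "(v, u) \<notin> S\<^sup>+"
    using topological unfolding sorted_wrt_iff_nth_less by auto
  moreover have "u \<in> T" "v \<in> T"
    using \<open>a < b\<close> \<open>b < _\<close> \<open>set xs \<subseteq> T\<close> calculation(1,2) by auto
  ultimately show "(u, v) \<in> S\<^sup>+"
    using v \<open>conf u v\<close> unfolding valid_schedule_def by blast
qed

lemma singleton_levels_follow_schedule:
  assumes v: "valid_schedule T conf S" and "irreflp conf" "finite T"
  obtains Bs where "legal_partition conf T Bs" "follows_schedule conf S Bs"
proof -
  have "S \<subseteq> T \<times> T" and "acyclic S"
    using v unfolding valid_schedule_def is_schedule_def by simp_all
  then have "finite S"
    using \<open>finite T\<close> finite_subset by blast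
  obtain xs where "distinct xs" "set xs = T" "sorted_wrt (\<lambda>u v. (v, u) \<notin> S\<^sup>+) xs"
    using topological_order_exists[OF \<open>finite S\<close> \<open>acyclic S\<close> \<open>finite T\<close>] by blast
  then show ?thesis
    using that legal_partition_singletons[OF \<open>irreflp conf\<close>] follows_schedule_singletons[OF v]
    by blast
qed

section \<open>Latency\<close>

lemma successively_imp_trancl:
  "successively (\<lambda>x y. (x, y) \<in> S) (a # w) \<Longrightarrow> b \<in> set w \<Longrightarrow> (a, b) \<in> S\<^sup>+"
proof (induction w arbitrary: a)
  case (Cons c w)
  have "(a, c) \<in> S" and walk: "successively (\<lambda>x y. (x, y) \<in> S) (c # w)"
    using Cons.prems(1) by simp_all
  show ?case
  proof (cases "b = c")
    case False
    then have "(c, b) \<in> S\<^sup>+"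
      using Cons.IH[OF walk] Cons.prems(2) by simp
    with \<open>(a, c) \<in> S\<close> show ?thesis
      by (rule trancl_into_trancl2)
  qed (use \<open>(a, c) \<in> S\<close> in simp)
qed simp

lemma distinct_if_successively_acyclic:
  "acyclic S \<Longrightarrow> successively (\<lambda>x y. (x, y) \<in> S) w \<Longrightarrow> distinct w"
proof (induction w)
  case (Cons a w)
  have "a \<notin> set w"
    using successively_imp_trancl[OF Cons.prems(2)] Cons.prems(1) unfolding acyclic_def by blast
  moreover have "distinct w"
    using Cons.IH[OF Cons.prems(1)] Cons.prems(2) by (auto simp: successively_Cons)
  ultimately show ?case
    by simp
qed simp

lemma set_successively_subset:
  "successively (\<lambda>x y. (x, y) \<in> S) w \<Longrightarrow> set w \<subseteq> insert (hd w) (Range S)"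
proof (induction w rule: induct_list012)
  case (3 x y zs)
  then have "(x, y) \<in> S" and "set (y # zs) \<subseteq> insert y (Range S)"
    by simp_all
  then show ?case
    by auto
qed simp_all

lemma trancl_imp_walk:
  "(a, b) \<in> S\<^sup>+ \<Longrightarrow> \<exists>c. c \<noteq> [] \<and> hd c = a \<and> successively (\<lambda>x y. (x, y) \<in> S) (c @ [b])"
proof (induction rule: converse_trancl_induct)
  case (base a)
  then show ?case
    by (intro exI[of _ "[a]"]) simp
next
  case (step a y)
  then obtain c where "c \<noteq> []" "hd c = y" "successively (\<lambda>x y. (x, y) \<in> S) (c @ [b])"
    by blast
  with step.hyps(1) show ?case
    by (intro exI[of _ "a # c"]) (cases c; simp)
qed

lemma walk_through_trancl_chain:
  "successively (\<lambda>x y. (x, y) \<in> S\<^sup>+) p \<Longrightarrow> p \<noteq> [] \<Longrightarrow>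
     \<exists>w. hd w = hd p \<and> set p \<subseteq> set w \<and> successively (\<lambda>x y. (x, y) \<in> S) w"
proof (induction p rule: induct_list012)
  case (2 a)
  show ?case
    by (intro exI[of _ "[a]"]) simp
next
  case (3 a b p)
  have "(a, b) \<in> S\<^sup>+" and "successively (\<lambda>x y. (x, y) \<in> S\<^sup>+) (b # p)"
    using "3.prems"(1) by simp_all
  then have "\<exists>w. hd w = b \<and> set (b # p) \<subseteq> set w \<and> successively (\<lambda>x y. (x, y) \<in> S) w"
    using "3.IH"(2) by simp
  then obtain w where w: "hd w = b" "set (b # p) \<subseteq> set w" "successively (\<lambda>x y. (x, y) \<in> S) w"
    by blast
  obtain c where c: "c \<noteq> []" "hd c = a" "successively (\<lambda>x y. (x, y) \<in> S) (c @ [b])"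
    using trancl_imp_walk[OF \<open>(a, b) \<in> S\<^sup>+\<close>] by blast
  have "w \<noteq> []"
    using w(2) by auto
  then have "successively (\<lambda>x y. (x, y) \<in> S) (c @ w)"
    using c(1,3) w(1,3) by (simp add: successively_append_iff)
  moreover have "set (a # b # p) \<subseteq> set (c @ w)"
    using c(1,2) w(2) hd_in_set[OF c(1)] by auto
  ultimately show ?case
    using c(1,2) by (intro exI[of _ "c @ w"]) simp
qed simp

lemma sched_path_iff_walk:
  assumes "acyclic S" "S \<subseteq> T \<times> T"
  shows "sched_path T S p \<longleftrightarrow> p \<noteq> [] \<and> hd p \<in> T \<and> successively (\<lambda>x y. (x, y) \<in> S) p"
proof
  assume path: "sched_path T S p"
  then have "p \<noteq> []" and "set p \<subseteq> T"
    unfolding sched_path_def by simp_all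
  moreover have "successively (\<lambda>x y. (x, y) \<in> S) p"
    using path unfolding sched_path_def successively_conv_nth by simp
  ultimately show "p \<noteq> [] \<and> hd p \<in> T \<and> successively (\<lambda>x y. (x, y) \<in> S) p"
    using hd_in_set by blast
next
  assume walk: "p \<noteq> [] \<and> hd p \<in> T \<and> successively (\<lambda>x y. (x, y) \<in> S) p"
  then have "set p \<subseteq> T"
    using set_successively_subset[of S p] \<open>S \<subseteq> T \<times> T\<close> by blast
  moreover have "distinct p"
    using distinct_if_successively_acyclic[OF \<open>acyclic S\<close>] walk by simp
  ultimately show "sched_path T S p"
    using walk unfolding sched_path_def successively_conv_nth by simp
qed

lemma finite_sched_paths:
  assumes "finite T"
  shows "finite {p. sched_path T S p}"
proof (rule finite_subset)
  show "{p. sched_path T S p} \<subseteq> {p. set p \<subseteq> T \<and> length p \<le> card T}"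
    unfolding sched_path_def using \<open>finite T\<close> by (auto simp: card_mono distinct_card[symmetric])
  show "finite {p. set p \<subseteq> T \<and> length p \<le> card T}"
    using \<open>finite T\<close> by (rule finite_lists_length_le)
qed

lemma sched_path_refine:
  fixes len :: "'a \<Rightarrow> nat"
  assumes "S \<subseteq> T \<times> T" "acyclic S" "L \<subseteq> S\<^sup>+" and path: "sched_path T L p"
  shows "\<exists>w. sched_path T S w \<and> sum_list (map len p) \<le> sum_list (map len w)"
proof -
  have "p \<noteq> []" and "set p \<subseteq> T" and "distinct p"
    using path unfolding sched_path_def by simp_all
  have "successively (\<lambda>x y. (x, y) \<in> L) p"
    using path unfolding sched_path_def successively_conv_nth by simp
  then have "successively (\<lambda>x y. (x, y) \<in> S\<^sup>+) p"
    by (rule successively_mono) (use \<open>L \<subseteq> S\<^sup>+\<close> in blast)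
  then obtain w where w: "hd w = hd p" "set p \<subseteq> set w" "successively (\<lambda>x y. (x, y) \<in> S) w"
    using walk_through_trancl_chain[OF _ \<open>p \<noteq> []\<close>] by blast
  have "w \<noteq> []"
    using w(2) \<open>p \<noteq> []\<close> by (metis set_empty subset_empty)
  moreover have "hd w \<in> T"
    using w(1) hd_in_set[OF \<open>p \<noteq> []\<close>] \<open>set p \<subseteq> T\<close> by (metis subsetD)
  ultimately have "sched_path T S w"
    using sched_path_iff_walk[OF assms(2,1)] w(3) by blast
  have "sum_list (map len p) = sum len (set p)"
    using \<open>distinct p\<close> by (simp add: sum_list_distinct_conv_sum_set)
  also have "\<dots> \<le> sum len (set w)"
    using w(2) by (simp add: sum_mono2)
  also have "\<dots> = sum_list (map len w)"
    using \<open>sched_path T S w\<close> unfolding sched_path_def by (simp add: sum_list_distinct_conv_sum_set)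
  finally show ?thesis
    using \<open>sched_path T S w\<close> by blast
qed

lemma latency_mono:
  assumes "finite T" "S \<subseteq> T \<times> T" "acyclic S" "L \<subseteq> S\<^sup>+"
  shows "latency T len L \<le> latency T len S"
proof (cases "T = {}")
  case True
  then show ?thesis
    unfolding latency_def sched_path_def by simp
next
  case False
  let ?weights = "\<lambda>X. {sum_list (map len p) | p. sched_path T X p}"
  obtain t where "t \<in> T"
    using False by blast
  then have "sched_path T L [t]"
    unfolding sched_path_def by simp
  then have "?weights L \<noteq> {}"
    by blast
  moreover have "finite (?weights L)" and "finite (?weights S)"
    using finite_sched_paths[OF \<open>finite T\<close>] by simp_all
  moreover have "a \<le> Max (?weights S)" if weight: "a \<in> ?weights L" for a
  proof -
    obtain p where "sched_path T L p" and "a = sum_list (map len p)"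
      using weight by blast
    moreover obtain w where "sched_path T S w" and "sum_list (map len p) \<le> sum_list (map len w)"
      using sched_path_refine[OF assms(2-4) \<open>sched_path T L p\<close>, of len] by blast
    moreover have "sum_list (map len w) \<le> Max (?weights S)"
      by (rule Max_ge[OF \<open>finite (?weights S)\<close>]) (use \<open>sched_path T S w\<close> in blast)
    ultimately show ?thesis
      by simp
  qed
  ultimately show ?thesis
    unfolding latency_def by simp
qed

lemma symp_conflict: "symp (conflict R W)"
  unfolding symp_def conflict_def by blast

lemma irreflp_conflict: "irreflp (conflict R W)"
  unfolding irreflp_def conflict_def by blast

theorem theorem3:
  fixes T :: "'tx set" and R W :: "'tx \<Rightarrow> 'o set"
    and res :: "'tx \<Rightarrow> ('o \<Rightarrow> 'v) \<Rightarrow> 'r" and wr :: "'tx \<Rightarrow> ('o \<Rightarrow> 'v) \<Rightarrow> ('o \<Rightarrow> 'v)"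
    and len :: "'tx \<Rightarrow> nat" and S :: "('tx \<times> 'tx) set"
  assumes "wf_block T R W res wr len"
    and "valid_schedule T (conflict R W) S"
  shows "\<exists>Bs. legal_partition (conflict R W) T Bs \<and>
           is_schedule T (LevelSchedule (conflict R W) Bs) \<and>
           equivalent_schedules T W res wr (LevelSchedule (conflict R W) Bs) S \<and>
           latency T len (LevelSchedule (conflict R W) Bs) \<le> latency T len S"
proof -
  have "finite T"
    using assms(1) unfolding wf_block_def by simp
  have "S \<subseteq> T \<times> T" and "acyclic S"
    using assms(2) unfolding valid_schedule_def is_schedule_def by simp_all
  obtain Bs where legal: "legal_partition (conflict R W) T Bs"
    and follows: "follows_schedule (conflict R W) S Bs"
    using singleton_levels_follow_schedule[OF assms(2) irreflp_conflict \<open>finite T\<close>] .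
  note level_facts = assms(2) symp_conflict legal follows
  have valid: "valid_schedule T (conflict R W) (LevelSchedule (conflict R W) Bs)"
    using LevelSchedule_valid[OF level_facts] .
  have "equivalent_schedules T W res wr (LevelSchedule (conflict R W) Bs) S"
    using equivalent_schedules_if_same_conflict_order[OF assms(1) valid assms(2)]
      LevelSchedule_same_conflict_order[OF level_facts] by blast
  moreover have "latency T len (LevelSchedule (conflict R W) Bs) \<le> latency T len S"
    using latency_mono[OF \<open>finite T\<close> \<open>S \<subseteq> T \<times> T\<close> \<open>acyclic S\<close>]
      LevelSchedule_subset_trancl[OF follows] by blast
  ultimately show ?thesis
    using legal valid unfolding valid_schedule_def by blast
qed

end
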